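(* Assume the two-band model with RD-optimal compression described in the context, with common per-sensor rate $R>0$ (so that $0\le\lambda<S_{\rm L}+N_0$ and $B_{\rm L}>0$), and let $\mathbf p\in\mathbb R^d$ be distinct from all sensor positions. Then the Fisher-information rate matrix satisfies $$\mathbf J^{\rm RD}_\infty(\mathbf p)=\frac{4\pi^2}{3}\big(J_{\rm L}(R)+J_{\rm H}(R)\big)\,\mathbf G(\mathbf p).$$ Consequently, whenever $\mathbf G(\mathbf p)$ is nonsingular, $$\big(\mathbf J^{\rm RD}_\infty(\mathbf p)\big)^{-1}=\frac{3}{4\pi^2}\,\frac{1}{J_{\rm L}(R)+J_{\rm H}(R)}\,\mathbf G^{-1}(\mathbf p),$$ so that the CRLB for any unbiased estimator $\widehat{\mathbf p}$ based on the compressed observations over $[0,T]$ reads $\mathrm{Cov}(\widehat{\mathbf p}-\mathbf p)\succeq \frac{1}{T}\big(\mathbf J^{\rm RD}_\infty(\mathbf p)\big)^{-1}+o(1/T)$.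
   Context: Setup. Let $M\ge2$, $d\ge1$, sensor positions $\mathbf p_1,\dots,\mathbf p_M\in\mathbb R^d$, propagation speed $c>0$, unknown source location $\mathbf p\in\mathbb R^d$, and $\tau_m(\mathbf p)=\|\mathbf p-\mathbf p_m\|_2/c$. Let $\mathbf v(f;\mathbf p)=[e^{-j2\pi f\tau_1(\mathbf p)},\dots,e^{-j2\pi f\tau_M(\mathbf p)}]^T\in\mathbb C^M$. Two-band model: fix $0<f_{\rm L}<f_{\rm H}$, $S_{\rm L}>S_{\rm H}>0$, $N_0>0$; bands $\mathcal B_{\rm L}=\{f:|f|\le f_{\rm L}\}$, $\mathcal B_{\rm H}=\{f:f_{\rm L}<|f|\le f_{\rm H}\}$. Source PSD $S_s(f)=S_{\rm L}$ on $\mathcal B_{\rm L}$, $S_{\rm H}$ on $\mathcal B_{\rm H}$, $0$ for $|f|>f_{\rm H}$; every sensor has noise PSD $N_0$ on $|f|\le f_{\rm H}$ and $0$ otherwise; sensor $m$ observes $x_m(t)=s(t-\tau_m(\mathbf p))+n_m(t)$ with independent Gaussian noises. RD-optimal compression with common rate $R$: the water level $\lambda=\lambda(R)\ge0$ solves $R=f_{\rm L}[\log_2((S_{\rm L}+N_0)/\lambda)]^++(f_{\rm H}-f_{\rm L})[\log_2((S_{\rm H}+N_0)/\lambda)]^+$, where $[u]^+=\max\{u,0\}$. The gain is $B(f)=[1-\lambda/(S_s(f)+N_0)]^+$ for $|f|\le f_{\rm H}$ and $0$ otherwise; it takes the constant value $B_b=B_b(R)$ on $\mathcal B_b$, $b\in\{{\rm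 L},{\rm H}\}$. The compressed observation at sensor $m$ is $\widehat x_m=b*x_m+z_m$ with independent Gaussian compression noise of PSD $\lambda B(f)$. The compressed cross-spectral density matrix is $\mathbf S(f;\mathbf p)=S_s(f)B(f)^2\mathbf v\mathbf v^H+S_w(f)\mathbf I_M$, with $S_w(f)=B(f)^2N_0+\lambda B(f)$. Fisher-information rate (Whittle): $[\mathbf J^{\rm RD}_\infty(\mathbf p)]_{ij}=\frac12\int_{\{f:\,|f|\le f_{\rm H},\,B(f)>0\}}\mathrm{tr}\big(\mathbf S^{-1}\,\partial_{p_i}\mathbf S\,\mathbf S^{-1}\,\partial_{p_j}\mathbf S\big)\,df$, $1\le i,j\le d$ (frequencies with $B(f)=0$ carry no signal and contribute zero); the Fisher information over $[0,T]$ is $T\mathbf J^{\rm RD}_\infty+o(T)$. Band quantities: for $b$ with $B_b>0$, $S_{w,b}=B_b^2N_0+\lambda B_b$, $\gamma_b=S_bB_b^2/S_{w,b}$, $w_b(R)=2M\gamma_b^2/(1+M\gamma_b)$; if $B_b=0$ set $w_b(R)=0$. Define $J_{\rm L}(R)=f_{\rm L}^3w_{\rm L}(R)$ and $J_{\rm H}(R)=(f_{\rm H}^3-f_{\rm L}^3)w_{\rm H}(R)$. Geometry: $\mathbf g_i(\mathbf p)=[\partial\tau_1/\partial p_i,\dots,\partial\tau_M/\partial p_i]^T$ with $\partial\tau_m/\partial p_i=\frac1c\frac{p_i-[\mathbf p_m]_i}{\|\mathbf p-\mathbf p_m\|_2}$; $\mathbf P=\mathbf I_M-\frac1M\mathbf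 1\mathbf 1^T$; $\tilde{\mathbf g}_i=\mathbf P\mathbf g_i$; $[\mathbf G(\mathbf p)]_{ij}=\tilde{\mathbf g}_i^T\tilde{\mathbf g}_j$. *)

theory Defs
  imports "HOL-Analysis.Analysis"
begin

definition Ss :: "real \<Rightarrow> real \<Rightarrow> real \<Rightarrow> real \<Rightarrow> real \<Rightarrow> real" where
  "Ss fL fH SL SH f = (if \<bar>f\<bar> \<le> fL then SL else if \<bar>f\<bar> \<le> fH then SH else 0)"

definition Bgain :: "real \<Rightarrow> real \<Rightarrow> real \<Rightarrow> real \<Rightarrow> real \<Rightarrow> real \<Rightarrow> real \<Rightarrow> real" where
  "Bgain fL fH SL SH N0 lam f =
     (if \<bar>f\<bar> \<le> fH then max 0 (1 - lam / (Ss fL fH SL SH f + N0)) else 0)"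

definition Sw :: "real \<Rightarrow> real \<Rightarrow> real \<Rightarrow> real \<Rightarrow> real \<Rightarrow> real \<Rightarrow> real \<Rightarrow> real" where
  "Sw fL fH SL SH N0 lam f =
     (Bgain fL fH SL SH N0 lam f)^2 * N0 + lam * Bgain fL fH SL SH N0 lam f"

definition rate_of_level :: "real \<Rightarrow> real \<Rightarrow> real \<Rightarrow> real \<Rightarrow> real \<Rightarrow> real \<Rightarrow> real" where
  "rate_of_level fL fH SL SH N0 lam =
     fL * max 0 (log 2 ((SL + N0) / lam)) + (fH - fL) * max 0 (log 2 ((SH + N0) / lam))"

definition tau :: "real \<Rightarrow> ('m \<Rightarrow> real^'d) \<Rightarrow> real^'d \<Rightarrow> 'm \<Rightarrow> real" where
  "tau c pp p m = norm (p - pp m) / c"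

definition steer :: "real \<Rightarrow> ('m::finite \<Rightarrow> real^'d) \<Rightarrow> real \<Rightarrow> real^'d \<Rightarrow> complex^'m" where
  "steer c pp f p = (\<chi> m. exp (- \<i> * of_real (2 * pi * f * tau c pp p m)))"

definition Smat :: "real \<Rightarrow> ('m::finite \<Rightarrow> real^'d) \<Rightarrow> real \<Rightarrow> real \<Rightarrow> real \<Rightarrow> real \<Rightarrow> real \<Rightarrow> real
                    \<Rightarrow> real \<Rightarrow> real^'d \<Rightarrow> complex^'m^'m" where
  "Smat c pp fL fH SL SH N0 lam f p =
     (\<chi> a b. of_real (Ss fL fH SL SH f * (Bgain fL fH SL SH N0 lam f)^2)
               * (steer c pp f p $ a) * cnj (steer c pp f p $ b)
             + (if a = b then of_real (Sw fL fH SL SH N0 lam f) else 0))"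

definition dSmat :: "real \<Rightarrow> ('m::finite \<Rightarrow> real^'d) \<Rightarrow> real \<Rightarrow> real \<Rightarrow> real \<Rightarrow> real \<Rightarrow> real \<Rightarrow> real
                    \<Rightarrow> 'd::finite \<Rightarrow> real \<Rightarrow> real^'d \<Rightarrow> complex^'m^'m" where
  "dSmat c pp fL fH SL SH N0 lam i f p =
     vector_derivative (\<lambda>t. Smat c pp fL fH SL SH N0 lam f (p + t *\<^sub>R axis i 1)) (at 0)"

definition fisher_integrand :: "real \<Rightarrow> ('m::finite \<Rightarrow> real^'d) \<Rightarrow> real \<Rightarrow> real \<Rightarrow> real \<Rightarrow> real \<Rightarrow> real \<Rightarrow> real
                    \<Rightarrow> real^'d \<Rightarrow> 'd::finite \<Rightarrow> 'd \<Rightarrow> real \<Rightarrow> complex" where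
  "fisher_integrand c pp fL fH SL SH N0 lam p i j f =
     (let Si = matrix_inv (Smat c pp fL fH SL SH N0 lam f p) in
      trace (Si ** dSmat c pp fL fH SL SH N0 lam i f p ** Si ** dSmat c pp fL fH SL SH N0 lam j f p))"

definition active_band :: "real \<Rightarrow> real \<Rightarrow> real \<Rightarrow> real \<Rightarrow> real \<Rightarrow> real \<Rightarrow> real set" where
  "active_band fL fH SL SH N0 lam = {f. \<bar>f\<bar> \<le> fH \<and> Bgain fL fH SL SH N0 lam f > 0}"

text \<open>Fisher-information rate matrix J^RD_infinity(p) (the trace is real; we take the real part).\<close>
definition J_RD :: "real \<Rightarrow> ('m::finite \<Rightarrow> real^'d) \<Rightarrow> real \<Rightarrow> real \<Rightarrow> real \<Rightarrow> real \<Rightarrow> real \<Rightarrow> real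
                    \<Rightarrow> real^'d \<Rightarrow> real^'d^'d" where
  "J_RD c pp fL fH SL SH N0 lam p =
     (\<chi> i j. Re (integral (active_band fL fH SL SH N0 lam)
                       (fisher_integrand c pp fL fH SL SH N0 lam p i j)) / 2)"

definition band_w :: "nat \<Rightarrow> real \<Rightarrow> real \<Rightarrow> real \<Rightarrow> real \<Rightarrow> real" where
  "band_w M N0 lam Sb Bb =
     (if Bb > 0 then
        (let Swb = Bb^2 * N0 + lam * Bb; \<gamma> = Sb * Bb^2 / Swb in
         2 * real M * \<gamma>^2 / (1 + real M * \<gamma>))
      else 0)"

definition J_L :: "nat \<Rightarrow> real \<Rightarrow> real \<Rightarrow> real \<Rightarrow> real \<Rightarrow> real" where
  "J_L M fL SL N0 lam = fL^3 * band_w M N0 lam SL (max 0 (1 - lam / (SL + N0)))"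

definition J_H :: "nat \<Rightarrow> real \<Rightarrow> real \<Rightarrow> real \<Rightarrow> real \<Rightarrow> real \<Rightarrow> real" where
  "J_H M fL fH SH N0 lam = (fH^3 - fL^3) * band_w M N0 lam SH (max 0 (1 - lam / (SH + N0)))"

definition gvec :: "real \<Rightarrow> ('m::finite \<Rightarrow> real^'d) \<Rightarrow> real^'d \<Rightarrow> 'd::finite \<Rightarrow> real^'m" where
  "gvec c pp p i = (\<chi> m. (1 / c) * ((p $ i - pp m $ i) / norm (p - pp m)))"

definition Pcent :: "real^'m::finite^'m" where
  "Pcent = mat 1 - (1 / real CARD('m)) *\<^sub>R (\<chi> a b. 1)"

definition Gmat :: "real \<Rightarrow> ('m::finite \<Rightarrow> real^'d) \<Rightarrow> real^'d \<Rightarrow> real^'d::finite^'d" where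
  "Gmat c pp p = (\<chi> i j. (Pcent *v gvec c pp p i) \<bullet> (Pcent *v gvec c pp p j))"

end

theory Submission
  imports Defs
begin

text \<open>
  The compressed cross-spectral density is a rank-one perturbation of a scalar matrix,
  \<open>S = A v v\<^sup>H + s I\<close> with unimodular steering vector \<open>v\<close>, so Sherman-Morrison
  inverts it in closed form. Moving the source along the \<open>i\<close>-th axis only rotates the phases
  of \<open>v\<close>, so \<open>\<partial>\<^sub>i S\<close> is \<open>v v\<^sup>H\<close> weighted entrywise by \<open>K (g\<^sub>i a - g\<^sub>i b)\<close> with
  \<open>K = -2\<pi>i f A\<close>. In \<open>tr(S\<^sup>-\<^sup>1 \<partial>\<^sub>i S S\<^sup>-\<^sup>1 \<partial>\<^sub>j S)\<close> all phases cancel, leaving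
  \<open>(2\<pi>f)\<^sup>2 2M\<gamma>\<^sup>2/(1 + M\<gamma>)\<close> times the centred Gram entry \<open>G\<^sub>i\<^sub>j\<close>, where \<open>\<gamma> = A/s\<close> is
  constant on each band. Integrating \<open>f\<^sup>2\<close> over the two bands gives the weights
  \<open>f\<^sub>L\<^sup>3\<close> and \<open>f\<^sub>H\<^sup>3 - f\<^sub>L\<^sup>3\<close>.
\<close>

definition rank1_scalar :: "complex^'m::finite \<Rightarrow> complex \<Rightarrow> complex \<Rightarrow> complex^'m^'m" where
  "rank1_scalar v A s = (\<chi> a b. A * v$a * cnj (v$b) + (if a = b then s else 0))"

(* Sherman-Morrison inverse of rank1_scalar v A s; it uses v\<^sup>H v = M, i.e. a unimodular v. *)
definition rank1_scalar_inv :: "complex^'m::finite \<Rightarrow> complex \<Rightarrow> complex \<Rightarrow> complex^'m^'m" where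
  "rank1_scalar_inv v A s =
     (\<chi> a b. (if a = b then 1 / s else 0) - A / (s * (s + A * of_nat CARD('m))) * v$a * cnj (v$b))"

(* Derivative of A v v\<^sup>H when v\<^sub>m' = (K / A) g m v\<^sub>m with K / A imaginary. *)
definition delay_deriv :: "complex^'m::finite \<Rightarrow> complex \<Rightarrow> ('m \<Rightarrow> complex) \<Rightarrow> complex^'m^'m" where
  "delay_deriv v K g = (\<chi> a b. K * (g a - g b) * v$a * cnj (v$b))"

lemma rank1_scalar_mult_inv:
  fixes v :: "complex^'m::finite"
  assumes unimodular: "\<And>k. v$k * cnj (v$k) = 1"
    and "s \<noteq> 0" and "s + A * of_nat CARD('m) \<noteq> 0"
  shows "rank1_scalar v A s ** rank1_scalar_inv v A s = mat 1"
proof -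
  define \<kappa> where "\<kappa> = A / (s * (s + A * of_nat CARD('m)))"
  have "\<kappa> * (s + A * of_nat CARD('m)) = A / s"
    using assms(2,3) unfolding \<kappa>_def by (simp add: divide_simps)
  then have \<kappa>: "A / s - \<kappa> * A * of_nat CARD('m) - s * \<kappa> = 0"
    by (simp add: algebra_simps)
  have "(rank1_scalar v A s ** rank1_scalar_inv v A s) $ a $ b = (if a = b then 1 else 0)" for a b
  proof -
    have "(rank1_scalar v A s ** rank1_scalar_inv v A s) $ a $ b =
      (\<Sum>k\<in>UNIV. (if k = b then A * v$a * cnj (v$b) / s else 0)
                 - \<kappa> * A * v$a * cnj (v$b) * (cnj (v$k) * v$k)
                 + (if a = k then (if k = b then 1 else 0) else 0)
                 - (if a = k then s * \<kappa> * v$a * cnj (v$b) else 0))"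
      unfolding rank1_scalar_def rank1_scalar_inv_def matrix_matrix_mult_def \<kappa>_def[symmetric]
      by (simp only: vec_lambda_beta, intro sum.cong refl) (use assms(2) in \<open>auto simp: algebra_simps\<close>)
    also have "\<dots> = (if a = b then 1 else 0) + v$a * cnj (v$b) * (A / s - \<kappa> * A * of_nat CARD('m) - s * \<kappa>)"
      using unimodular by (simp add: sum.distrib sum_subtractf mult.commute algebra_simps)
    finally show ?thesis
      using \<kappa> by simp
  qed
  then show ?thesis
    by (simp add: vec_eq_iff mat_def)
qed

lemma invertible_matrix_inv:
  fixes A :: "'a::semiring_1^'n^'m"
  assumes "invertible A"
  shows "A ** matrix_inv A = mat 1" and "matrix_inv A ** A = mat 1"
proof -
  obtain A' where "A ** A' = mat 1 \<and> A' ** A = mat 1"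
    using assms unfolding invertible_def by blast
  then have "A ** matrix_inv A = mat 1 \<and> matrix_inv A ** A = mat 1"
    unfolding matrix_inv_def by (rule someI)
  then show "A ** matrix_inv A = mat 1" and "matrix_inv A ** A = mat 1"
    by simp_all
qed

lemma matrix_inv_eqI:
  fixes A X :: "'a::field^'n::finite^'n"
  assumes "A ** X = mat 1"
  shows "matrix_inv A = X"
proof -
  have "invertible A"
    using assms matrix_left_right_inverse unfolding invertible_def by blast
  have "matrix_inv A = matrix_inv A ** (A ** X)"
    by (simp add: assms matrix_mul_rid)
  also have "\<dots> = X"
    by (simp add: matrix_mul_assoc invertible_matrix_inv(2)[OF \<open>invertible A\<close>] matrix_mul_lid)
  finally show ?thesis .
qed

lemma matrix_inv_scaleR:
  fixes G :: "real^'n::finite^'n"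
  assumes "invertible G" and "k \<noteq> 0"
  shows "matrix_inv (k *\<^sub>R G) = (1 / k) *\<^sub>R matrix_inv G"
  using assms
  by (intro matrix_inv_eqI) (simp add: matrix_scalar_ac scalar_matrix_assoc[symmetric] invertible_matrix_inv(1))

lemma rank1_scalar_inv_mult_delay_deriv:
  fixes v :: "complex^'m::finite"
  assumes unimodular: "\<And>k. v$k * cnj (v$k) = 1"
  shows "(rank1_scalar_inv v A s ** delay_deriv v K g) $ a $ b =
     K * v$a * cnj (v$b) * ((g a - g b) / s
       - A / (s * (s + A * of_nat CARD('m))) * (sum g UNIV - of_nat CARD('m) * g b))"
proof -
  define \<kappa> where "\<kappa> = A / (s * (s + A * of_nat CARD('m)))"
  have "(rank1_scalar_inv v A s ** delay_deriv v K g) $ a $ b =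
      (\<Sum>k\<in>UNIV. (if a = k then K * (g a - g b) * v$a * cnj (v$b) / s else 0)
                 - \<kappa> * K * v$a * cnj (v$b) * (g k - g b) * (cnj (v$k) * v$k))"
    unfolding delay_deriv_def rank1_scalar_inv_def matrix_matrix_mult_def \<kappa>_def[symmetric]
    by (simp only: vec_lambda_beta, intro sum.cong refl) (auto simp: algebra_simps diff_divide_distrib)
  also have "\<dots> = K * (g a - g b) * v$a * cnj (v$b) / s - (\<Sum>k\<in>UNIV. \<kappa> * K * v$a * cnj (v$b) * (g k - g b))"
    using unimodular by (simp add: sum_subtractf mult.commute)
  also have "\<dots> = K * (g a - g b) * v$a * cnj (v$b) / s - \<kappa> * K * v$a * cnj (v$b) * (\<Sum>k\<in>UNIV. g k - g b)"
    by (simp add: sum_distrib_left)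
  also have "(\<Sum>k\<in>UNIV. g k - g b) = sum g UNIV - of_nat CARD('m) * g b"
    by (simp add: sum_subtractf)
  finally show ?thesis
    unfolding \<kappa>_def by (simp add: algebra_simps)
qed

lemma trace_mult_outer_weighted:
  fixes v :: "complex^'m::finite" and X Y :: "complex^'m^'m"
  assumes unimodular: "\<And>k. v$k * cnj (v$k) = 1"
    and X: "\<And>a b. X $ a $ b = K * v$a * cnj (v$b) * x a b"
    and Y: "\<And>a b. Y $ a $ b = K * v$a * cnj (v$b) * y a b"
  shows "trace (X ** Y) = K^2 * (\<Sum>a\<in>UNIV. \<Sum>b\<in>UNIV. x a b * y b a)"
proof -
  have "trace (X ** Y) =
      (\<Sum>a\<in>UNIV. \<Sum>b\<in>UNIV. K^2 * (x a b * y b a) * ((v$a * cnj (v$a)) * (v$b * cnj (v$b))))"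
    unfolding trace_def matrix_matrix_mult_def X Y
    by (simp add: algebra_simps power2_eq_square)
  then show ?thesis
    using unimodular by (simp add: sum_distrib_left)
qed

lemma double_sum_affine_product:
  fixes g e :: "'m::finite \<Rightarrow> complex"
  defines "M \<equiv> of_nat CARD('m) :: complex"
  shows "(\<Sum>a\<in>UNIV. \<Sum>b\<in>UNIV. (P * g a + (Q * M - P) * g b - Q * sum g UNIV) *
            (P * e b + (Q * M - P) * e a - Q * sum e UNIV))
      = 2 * P * (Q * M - P) * (M * (\<Sum>a\<in>UNIV. g a * e a) - sum g UNIV * sum e UNIV)"
proof -
  define G E H R where "G = sum g UNIV" and "E = sum e UNIV"
    and "H = (\<Sum>a\<in>UNIV. g a * e a)" and "R = Q * M - P"
  have "(\<Sum>a\<in>UNIV. \<Sum>b\<in>UNIV. (P * g a + R * g b - Q * G) * (P * e b + R * e a - Q * E))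
     = (\<Sum>a\<in>UNIV. \<Sum>b\<in>UNIV. P*P*(g a * e b) + P*R*(g a * e a) - P*Q*E * g a + R*P*(g b * e b)
          + R*R*(g b * e a) - R*Q*E*g b - Q*P*G * e b - Q*R*G * e a + Q*Q*G*E)"
    by (simp add: algebra_simps)
  also have "\<dots> = P*P*G*E + P*R*M*H - P*Q*E*M*G + R*P*M*H + R*R*G*E - R*Q*E*M*G - Q*P*G*M*E
                  - Q*R*G*M*E + Q*Q*M*M*G*E"
    unfolding G_def E_def H_def M_def
    by (simp add: sum.distrib sum_subtractf sum_distrib_left[symmetric] sum_distrib_right[symmetric]
        algebra_simps, simp add: sum_distrib_left mult_ac)
  also have "\<dots> = 2 * P * R * (M * H - G * E)"
    unfolding R_def by (simp add: algebra_simps power2_eq_square)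
  finally show ?thesis
    unfolding G_def E_def H_def R_def .
qed

lemma trace_rank1_scalar_delay_deriv:
  fixes v :: "complex^'m::finite" and g e :: "'m \<Rightarrow> complex"
  defines "M \<equiv> of_nat CARD('m) :: complex"
  assumes unimodular: "\<And>k. v$k * cnj (v$k) = 1"
    and "s \<noteq> 0" and "s + A * M \<noteq> 0"
  shows "trace (rank1_scalar_inv v A s ** delay_deriv v K g ** rank1_scalar_inv v A s ** delay_deriv v K e)
    = - 2 * K^2 / (s * (s + A * M)) * (M * (\<Sum>a\<in>UNIV. g a * e a) - sum g UNIV * sum e UNIV)"
proof -
  define \<kappa> where "\<kappa> = A / (s * (s + A * M))"
  have "trace (rank1_scalar_inv v A s ** delay_deriv v K g ** rank1_scalar_inv v A s ** delay_deriv v K e)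
      = trace ((rank1_scalar_inv v A s ** delay_deriv v K g) ** (rank1_scalar_inv v A s ** delay_deriv v K e))"
    by (simp add: matrix_mul_assoc)
  also have "\<dots> = K^2 * (\<Sum>a\<in>UNIV. \<Sum>b\<in>UNIV.
       ((g a - g b) / s - \<kappa> * (sum g UNIV - M * g b)) * ((e b - e a) / s - \<kappa> * (sum e UNIV - M * e a)))"
    by (rule trace_mult_outer_weighted[OF unimodular])
      (simp_all add: rank1_scalar_inv_mult_delay_deriv[OF unimodular] \<kappa>_def M_def)
  also have "(\<Sum>a\<in>UNIV. \<Sum>b\<in>UNIV.
       ((g a - g b) / s - \<kappa> * (sum g UNIV - M * g b)) * ((e b - e a) / s - \<kappa> * (sum e UNIV - M * e a)))
     = (\<Sum>a\<in>UNIV. \<Sum>b\<in>UNIV. (1 / s * g a + (\<kappa> * M - 1 / s) * g b - \<kappa> * sum g UNIV) *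
            (1 / s * e b + (\<kappa> * M - 1 / s) * e a - \<kappa> * sum e UNIV))"
    by (intro sum.cong refl) (simp add: algebra_simps diff_divide_distrib)
  also have "\<dots> = 2 * (1 / s) * (\<kappa> * M - 1 / s) * (M * (\<Sum>a\<in>UNIV. g a * e a) - sum g UNIV * sum e UNIV)"
    unfolding M_def by (rule double_sum_affine_product)
  also have "2 * (1 / s) * (\<kappa> * M - 1 / s) = - 2 / (s * (s + A * M))"
    using assms(3,4) unfolding \<kappa>_def by (simp add: divide_simps)
  finally show ?thesis
    by (simp add: mult_ac)
qed

lemma rank1_scalar_denominator_nonzero:
  fixes A s :: real
  assumes "s > 0" and "A \<ge> 0"
  shows "complex_of_real s + complex_of_real A * of_nat CARD('m::finite) \<noteq> 0"
proof -
  have "s + A * real CARD('m) > 0"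
    using assms by (simp add: add_pos_nonneg)
  moreover have "complex_of_real s + complex_of_real A * of_nat CARD('m) = complex_of_real (s + A * real CARD('m))"
    by simp
  ultimately show ?thesis
    by (metis of_real_eq_0_iff less_irrefl)
qed

lemma matrix_inv_rank1_scalar:
  fixes v :: "complex^'m::finite" and A s :: real
  assumes unimodular: "\<And>k. v$k * cnj (v$k) = 1" and "s > 0" and "A \<ge> 0"
  shows "matrix_inv (rank1_scalar v (of_real A) (of_real s)) = rank1_scalar_inv v (of_real A) (of_real s)"
  using assms rank1_scalar_denominator_nonzero
  by (intro matrix_inv_eqI rank1_scalar_mult_inv) auto

lemma trace_rank1_scalar_delay_deriv_real:
  fixes v :: "complex^'m::finite" and A s \<omega> :: real and g e :: "'m \<Rightarrow> real"
  defines "M \<equiv> real CARD('m)"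
  assumes unimodular: "\<And>k. v$k * cnj (v$k) = 1" and "s > 0" and "A \<ge> 0"
  shows "trace (rank1_scalar_inv v (of_real A) (of_real s) ** delay_deriv v (- \<i> * of_real (\<omega> * A)) (\<lambda>m. of_real (g m))
                ** rank1_scalar_inv v (of_real A) (of_real s) ** delay_deriv v (- \<i> * of_real (\<omega> * A)) (\<lambda>m. of_real (e m)))
    = of_real (2 * (\<omega> * A)^2 / (s * (s + A * M)) * (M * (\<Sum>m\<in>UNIV. g m * e m) - sum g UNIV * sum e UNIV))"
  using trace_rank1_scalar_delay_deriv[OF unimodular _ rank1_scalar_denominator_nonzero[OF assms(3,4)]] assms(3)
  by (simp add: M_def power_mult_distrib)

lemma Pcent_mult_vec_component:
  "(Pcent *v (x::real^'m::finite)) $ k = x $ k - (\<Sum>j\<in>UNIV. x $ j) / real CARD('m)"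
proof -
  have "(Pcent *v x) $ k = (\<Sum>j\<in>UNIV. (if k = j then x $ j else 0) - x $ j / real CARD('m))"
    unfolding Pcent_def matrix_vector_mult_def mat_def
    by (simp, intro sum.cong refl) (auto simp: algebra_simps)
  then show ?thesis
    by (simp add: sum_subtractf sum_divide_distrib)
qed

lemma inner_Pcent_mult_vec:
  fixes x y :: "real^'m::finite"
  shows "(Pcent *v x) \<bullet> (Pcent *v y) =
     (\<Sum>k\<in>UNIV. x $ k * y $ k) - (\<Sum>k\<in>UNIV. x $ k) * (\<Sum>k\<in>UNIV. y $ k) / real CARD('m)"
proof -
  define X Y M where "X = (\<Sum>k\<in>UNIV. x $ k)" and "Y = (\<Sum>k\<in>UNIV. y $ k)" and "M = real CARD('m)"
  have "(Pcent *v x) \<bullet> (Pcent *v y) = (\<Sum>k\<in>UNIV. x $ k * y $ k - Y / M * x $ k - X / M * y $ k + X * Y / (M * M))"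
    by (simp add: inner_vec_def Pcent_mult_vec_component X_def Y_def M_def algebra_simps)
  also have "\<dots> = (\<Sum>k\<in>UNIV. x $ k * y $ k) - Y / M * X - X / M * Y + M * (X * Y / (M * M))"
  proof -
    have "(\<Sum>k\<in>UNIV. Y / M * x $ k) = Y / M * X" and "(\<Sum>k\<in>UNIV. X / M * y $ k) = X / M * Y"
      by (simp_all add: X_def Y_def sum_distrib_left)
    moreover have "(\<Sum>k\<in>(UNIV::'m set). X * Y / (M * M)) = M * (X * Y / (M * M))"
      by (simp add: M_def)
    ultimately show ?thesis
      by (simp only: sum.distrib sum_subtractf)
  qed
  also have "\<dots> = (\<Sum>k\<in>UNIV. x $ k * y $ k) - X * Y / M"
    by (simp add: M_def field_simps)
  finally show ?thesis
    unfolding X_def Y_def M_def .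
qed

lemma has_vector_derivative_vec_componentwise:
  fixes f :: "real \<Rightarrow> 'a::real_normed_vector^'n::finite"
  assumes "\<And>i. ((\<lambda>t. f t $ i) has_vector_derivative D $ i) (at x)"
  shows "(f has_vector_derivative D) (at x)"
proof -
  have "((\<lambda>y. (f y $ i - f x $ i - (y - x) *\<^sub>R D $ i) /\<^sub>R norm (y - x)) \<longlongrightarrow> 0) (at x)" for i
    using assms[of i]
    by (simp add: has_vector_derivative_def has_derivative_within[where s=UNIV] inverse_eq_divide diff_diff_eq)
  then have "((\<lambda>y. \<chi> i. (f y $ i - f x $ i - (y - x) *\<^sub>R D $ i) /\<^sub>R norm (y - x)) \<longlongrightarrow> (\<chi> i. 0)) (at x)"
    by (rule tendsto_vec_lambda)
  moreover have "(\<lambda>y. \<chi> i. (f y $ i - f x $ i - (y - x) *\<^sub>R D $ i) /\<^sub>R norm (y - x))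
     = (\<lambda>y. (f y - f x - (y - x) *\<^sub>R D) /\<^sub>R norm (y - x))"
    by (rule ext) (simp add: vec_eq_iff)
  ultimately have "((\<lambda>y. (f y - f x - (y - x) *\<^sub>R D) /\<^sub>R norm (y - x)) \<longlongrightarrow> 0) (at x)"
    by (simp add: zero_vec_def)
  then show ?thesis
    by (simp add: has_vector_derivative_def has_derivative_within[where s=UNIV] bounded_linear_scaleR_left
        inverse_eq_divide diff_diff_eq)
qed

lemma has_real_derivative_norm_along_axis:
  fixes p q :: "real^'d::finite"
  assumes "p \<noteq> q"
  shows "((\<lambda>t. norm (p + t *\<^sub>R axis i 1 - q)) has_real_derivative (p - q) $ i / norm (p - q)) (at 0)"
proof -
  have "((\<lambda>t. p + t *\<^sub>R axis i 1 - q) has_derivative (\<lambda>t. t *\<^sub>R axis i 1)) (at 0)"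
    by (auto intro!: derivative_eq_intros)
  moreover have "(norm has_derivative (\<lambda>h. h \<bullet> sgn (p - q))) (at ((\<lambda>t. p + t *\<^sub>R axis i 1 - q) 0))"
    using has_derivative_norm[of "p - q"] assms by simp
  ultimately have "((\<lambda>t. norm (p + t *\<^sub>R axis i 1 - q)) has_derivative (\<lambda>t. (t *\<^sub>R axis i 1) \<bullet> sgn (p - q))) (at 0)"
    using diff_chain_at by (fastforce simp: o_def)
  moreover have "(\<lambda>t. (t *\<^sub>R axis i 1) \<bullet> sgn (p - q)) = (*) ((p - q) $ i / norm (p - q))"
    by (simp add: fun_eq_iff inner_axis' sgn_div_norm divide_inverse mult_ac)
  ultimately show ?thesis
    by (simp add: has_field_derivative_def)
qed

lemma has_vector_derivative_steer:
  fixes pp :: "'m::finite \<Rightarrow> real^'d::finite"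
  assumes "p \<noteq> pp m"
  shows "((\<lambda>t. steer c pp f (p + t *\<^sub>R axis i 1) $ m) has_vector_derivative
           - \<i> * of_real (2 * pi * f * gvec c pp p i $ m) * steer c pp f p $ m) (at 0)"
proof -
  define u where "u t = - \<i> * of_real (2 * pi * f * (norm (p + t *\<^sub>R axis i 1 - pp m) / c))" for t
  have "((\<lambda>t. 2 * pi * f * (norm (p + t *\<^sub>R axis i 1 - pp m) / c)) has_real_derivative
          2 * pi * f * ((p - pp m) $ i / norm (p - pp m) / c)) (at 0)"
    by (intro DERIV_cmult DERIV_cdivide has_real_derivative_norm_along_axis assms)
  then have "((\<lambda>t. 2 * pi * f * (norm (p + t *\<^sub>R axis i 1 - pp m) / c)) has_real_derivative
          2 * pi * f * gvec c pp p i $ m) (at 0)"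
    by (simp add: gvec_def divide_inverse mult_ac)
  then have "(u has_vector_derivative - \<i> * of_real (2 * pi * f * gvec c pp p i $ m)) (at 0)"
    unfolding u_def by (intro has_vector_derivative_mult_right has_vector_derivative_of_real)
  moreover have "(exp has_field_derivative exp (u 0)) (at (u 0) within range u)"
    by (rule has_field_derivative_at_within) (rule DERIV_exp)
  ultimately have "((exp \<circ> u) has_vector_derivative - \<i> * of_real (2 * pi * f * gvec c pp p i $ m) * exp (u 0)) (at 0)"
    by (rule field_vector_diff_chain_within)
  then show ?thesis
    by (simp add: u_def o_def steer_def tau_def)
qed

lemma has_vector_derivative_outer_entry:
  fixes va vb :: "real \<Rightarrow> complex"
  assumes "(va has_vector_derivative va') (at x)" and "(vb has_vector_derivative vb') (at x)"
  shows "((\<lambda>t. A * va t * cnj (vb t) + C) has_vector_derivative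
           A * (va x * cnj vb' + va' * cnj (vb x))) (at x)"
proof -
  have "((\<lambda>t. A * va t * cnj (vb t)) has_vector_derivative A * va x * cnj vb' + A * va' * cnj (vb x)) (at x)"
    by (intro has_vector_derivative_mult has_vector_derivative_mult_right has_vector_derivative_cnj assms)
  then show ?thesis
    by (subst has_vector_derivative_add_const) (simp add: algebra_simps)
qed

lemma dSmat_eq_delay_deriv:
  fixes pp :: "'m::finite \<Rightarrow> real^'d::finite"
  assumes "\<forall>m. p \<noteq> pp m"
  shows "dSmat c pp fL fH SL SH N0 lam i f p =
     delay_deriv (steer c pp f p)
       (- \<i> * of_real (2 * pi * f * Ss fL fH SL SH f * (Bgain fL fH SL SH N0 lam f)^2))
       (\<lambda>m. of_real (gvec c pp p i $ m))"
proof -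
  define A where "A = complex_of_real (Ss fL fH SL SH f * (Bgain fL fH SL SH N0 lam f)^2)"
  define K where "K = - \<i> * of_real (2 * pi * f * Ss fL fH SL SH f * (Bgain fL fH SL SH N0 lam f)^2)"
  define g where "g = (\<lambda>m. complex_of_real (gvec c pp p i $ m))"
  define v where "v m t = steer c pp f (p + t *\<^sub>R axis i 1) $ m" for m t
  define \<omega> where "\<omega> m = - \<i> * of_real (2 * pi * f * gvec c pp p i $ m)" for m
  have dv: "(v m has_vector_derivative \<omega> m * v m 0) (at 0)" for m
    using has_vector_derivative_steer[OF assms[rule_format]] unfolding v_def \<omega>_def by simp
  have "((\<lambda>t. Smat c pp fL fH SL SH N0 lam f (p + t *\<^sub>R axis i 1)) has_vector_derivative
          delay_deriv (steer c pp f p) K g) (at 0)"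
  proof (intro has_vector_derivative_vec_componentwise)
    fix a b
    have "((\<lambda>t. A * v a t * cnj (v b t) + (if a = b then of_real (Sw fL fH SL SH N0 lam f) else 0))
       has_vector_derivative A * (v a 0 * cnj (\<omega> b * v b 0) + \<omega> a * v a 0 * cnj (v b 0))) (at 0)"
      by (rule has_vector_derivative_outer_entry[OF dv dv])
    moreover have "A * (v a 0 * cnj (\<omega> b * v b 0) + \<omega> a * v a 0 * cnj (v b 0))
        = delay_deriv (steer c pp f p) K g $ a $ b"
      by (simp add: delay_deriv_def v_def \<omega>_def A_def K_def g_def algebra_simps)
    ultimately show "((\<lambda>t. Smat c pp fL fH SL SH N0 lam f (p + t *\<^sub>R axis i 1) $ a $ b)
        has_vector_derivative delay_deriv (steer c pp f p) K g $ a $ b) (at 0)"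
      by (simp add: Smat_def v_def A_def)
  qed
  then show ?thesis
    unfolding dSmat_def K_def g_def by (rule vector_derivative_at)
qed

lemma steer_mult_cnj: "steer c pp f p $ k * cnj (steer c pp f p $ k) = 1"
proof -
  have "steer c pp f p $ k * cnj (steer c pp f p $ k)
      = exp (- \<i> * of_real (2 * pi * f * tau c pp p k) + cnj (- \<i> * of_real (2 * pi * f * tau c pp p k)))"
    unfolding steer_def vec_lambda_beta exp_cnj exp_add[symmetric] ..
  also have "\<dots> = 1"
    by simp
  finally show ?thesis .
qed

lemma whittle_weight_eq:
  fixes A s M \<omega> :: real
  assumes "s > 0" and "A \<ge> 0" and "M > 0"
  shows "2 * (\<omega> * A)^2 / (s * (s + A * M)) * (M * H - G * E)
       = \<omega>^2 * (2 * M * (A / s)^2 / (1 + M * (A / s))) * (H - G * E / M)"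
proof -
  define D where "D = s + A * M"
  have "D > 0"
    using assms unfolding D_def by (simp add: add_pos_nonneg)
  moreover have "1 + M * (A / s) = D / s"
    using assms(1) unfolding D_def by (simp add: field_simps)
  ultimately show ?thesis
    using assms(1,3) unfolding D_def[symmetric] by (simp add: field_simps power2_eq_square)
qed

lemma fisher_integrand_eq:
  fixes pp :: "'m::finite \<Rightarrow> real^'d::finite"
  assumes "\<forall>m. p \<noteq> pp m" and "N0 > 0" and "lam \<ge> 0"
    and B_pos: "Bgain fL fH SL SH N0 lam f > 0" and S_nonneg: "Ss fL fH SL SH f \<ge> 0"
  shows "fisher_integrand c pp fL fH SL SH N0 lam p i j f =
     of_real (4 * pi^2 * f^2 * band_w CARD('m) N0 lam (Ss fL fH SL SH f) (Bgain fL fH SL SH N0 lam f)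
              * Gmat c pp p $ i $ j)"
proof -
  define B S where "B = Bgain fL fH SL SH N0 lam f" and "S = Ss fL fH SL SH f"
  define A s M where "A = S * B^2" and "s = B^2 * N0 + lam * B" and "M = real CARD('m)"
  define v where "v = steer c pp f p"
  define G where "G k = (\<Sum>m\<in>UNIV. gvec c pp p k $ m)" for k
  define H where "H = (\<Sum>m\<in>UNIV. gvec c pp p i $ m * gvec c pp p j $ m)"
  have "s > 0"
    using B_pos assms(2,3) unfolding s_def B_def by (simp add: add_pos_nonneg)
  moreover have "A \<ge> 0"
    using S_nonneg unfolding A_def S_def by simp
  moreover have unimodular: "\<And>k. v$k * cnj (v$k) = 1"
    unfolding v_def by (rule steer_mult_cnj)
  moreover have "Smat c pp fL fH SL SH N0 lam f p = rank1_scalar v (of_real A) (of_real s)"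
    by (simp add: Smat_def rank1_scalar_def vec_eq_iff A_def s_def v_def B_def S_def Sw_def)
  ultimately have inv: "matrix_inv (Smat c pp fL fH SL SH N0 lam f p) = rank1_scalar_inv v (of_real A) (of_real s)"
    by (simp add: matrix_inv_rank1_scalar)
  have dS: "dSmat c pp fL fH SL SH N0 lam k f p
      = delay_deriv v (- \<i> * of_real (2 * pi * f * A)) (\<lambda>m. of_real (gvec c pp p k $ m))" for k
    unfolding dSmat_eq_delay_deriv[OF assms(1)] v_def A_def S_def B_def by (simp add: mult_ac)
  have "fisher_integrand c pp fL fH SL SH N0 lam p i j f
      = of_real (2 * (2 * pi * f * A)^2 / (s * (s + A * M)) * (M * H - G i * G j))"
    unfolding fisher_integrand_def Let_def inv dS G_def H_def M_def
    by (rule trace_rank1_scalar_delay_deriv_real[OF unimodular \<open>s > 0\<close> \<open>A \<ge> 0\<close>])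
  also have "2 * (2 * pi * f * A)^2 / (s * (s + A * M)) * (M * H - G i * G j)
      = (2 * pi * f)^2 * (2 * M * (A / s)^2 / (1 + M * (A / s))) * (H - G i * G j / M)"
    using \<open>s > 0\<close> \<open>A \<ge> 0\<close> by (intro whittle_weight_eq) (simp_all add: M_def)
  also have "2 * M * (A / s)^2 / (1 + M * (A / s)) = band_w CARD('m) N0 lam S B"
    using B_pos unfolding band_w_def B_def[symmetric] by (simp add: Let_def A_def s_def M_def)
  also have "H - G i * G j / M = Gmat c pp p $ i $ j"
    by (simp add: Gmat_def inner_Pcent_mult_vec H_def G_def M_def)
  finally show ?thesis
    unfolding S_def B_def by (simp add: power_mult_distrib)
qed

lemma fisher_integrand_restrict_active_band:
  fixes pp :: "'m::finite \<Rightarrow> real^'d::finite"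
  assumes "\<forall>m. p \<noteq> pp m" and "N0 > 0" and "lam \<ge> 0" and "SL \<ge> 0" and "SH \<ge> 0"
  shows "(if f \<in> active_band fL fH SL SH N0 lam then fisher_integrand c pp fL fH SL SH N0 lam p i j f else 0)
     = of_real (4 * pi^2 * Gmat c pp p $ i $ j * f^2
                * band_w CARD('m) N0 lam (Ss fL fH SL SH f) (Bgain fL fH SL SH N0 lam f))"
proof (cases "Bgain fL fH SL SH N0 lam f > 0")
  case True
  moreover have "Ss fL fH SL SH f \<ge> 0"
    using assms(4,5) by (simp add: Ss_def)
  moreover have "\<bar>f\<bar> \<le> fH"
    using True by (simp add: Bgain_def split: if_splits)
  ultimately show ?thesis
    using fisher_integrand_eq[OF assms(1-3)] by (simp add: active_band_def mult_ac)
next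
  case False
  then show ?thesis
    by (simp add: active_band_def band_w_def)
qed

lemma has_integral_square:
  fixes a b k :: real
  assumes "a \<le> b"
  shows "((\<lambda>x. k * x^2) has_integral k * (b^3 - a^3) / 3) {a..b}"
proof -
  have "((\<lambda>x. k * x^2) has_integral k * b^3 / 3 - k * a^3 / 3) {a..b}"
  proof (rule fundamental_theorem_of_calculus[OF assms])
    fix x
    have "((\<lambda>x. k * x^3 / 3) has_real_derivative k * x^2) (at x within {a..b})"
      by (auto intro!: derivative_eq_intros simp: power2_eq_square)
    then show "((\<lambda>x. k * x^3 / 3) has_vector_derivative k * x^2) (at x within {a..b})"
      by (simp add: has_real_derivative_iff_has_vector_derivative)
  qed
  then show ?thesis
    by (simp add: diff_divide_distrib right_diff_distrib)
qed

lemma has_integral_square_two_band: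
  fixes fL fH k wL wH :: real
  assumes "0 \<le> fL" and "fL \<le> fH"
  shows "((\<lambda>x. k * x^2 * (if \<bar>x\<bar> \<le> fL then wL else wH)) has_integral
           2 * k * (fL^3 * wL + (fH^3 - fL^3) * wH) / 3) {-fH..fH}"
proof -
  have "((\<lambda>x. k * wH * x^2) has_integral k * wH * (fH^3 - (-fH)^3) / 3) {-fH..fH}"
    using assms by (intro has_integral_square) simp
  moreover have "((\<lambda>x. if x \<in> {-fL..fL} then k * (wL - wH) * x^2 else 0) has_integral
                   k * (wL - wH) * (fL^3 - (-fL)^3) / 3) {-fH..fH}"
    using has_integral_square[of "-fL" fL "k * (wL - wH)"] assms by (subst has_integral_restrict) auto
  ultimately have "((\<lambda>x. k * wH * x^2 + (if x \<in> {-fL..fL} then k * (wL - wH) * x^2 else 0)) has_integral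
      k * wH * (fH^3 - (-fH)^3) / 3 + k * (wL - wH) * (fL^3 - (-fL)^3) / 3) {-fH..fH}"
    by (rule has_integral_add)
  moreover have "(\<lambda>x. k * wH * x^2 + (if x \<in> {-fL..fL} then k * (wL - wH) * x^2 else 0))
      = (\<lambda>x. k * x^2 * (if \<bar>x\<bar> \<le> fL then wL else wH))"
    by (auto simp: fun_eq_iff abs_le_iff algebra_simps)
  ultimately show ?thesis
    by (simp add: field_simps)
qed

lemma has_integral_fisher_integrand:
  fixes pp :: "'m::finite \<Rightarrow> real^'d::finite"
  assumes "\<forall>m. p \<noteq> pp m" and "N0 > 0" and "lam \<ge> 0" and "SL \<ge> 0" and "SH \<ge> 0"
    and "0 \<le> fL" and "fL \<le> fH"
  shows "(fisher_integrand c pp fL fH SL SH N0 lam p i j has_integral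
           of_real (2 * (4 * pi^2 / 3) * (J_L CARD('m) fL SL N0 lam + J_H CARD('m) fL fH SH N0 lam)
                    * Gmat c pp p $ i $ j)) (active_band fL fH SL SH N0 lam)"
proof -
  define k where "k = 4 * pi^2 * Gmat c pp p $ i $ j"
  define wL where "wL = band_w CARD('m) N0 lam SL (max 0 (1 - lam / (SL + N0)))"
  define wH where "wH = band_w CARD('m) N0 lam SH (max 0 (1 - lam / (SH + N0)))"
  have two_band: "((\<lambda>x. of_real (k * x^2 * (if \<bar>x\<bar> \<le> fL then wL else wH)) :: complex) has_integral
      of_real (2 * k * (fL^3 * wL + (fH^3 - fL^3) * wH) / 3)) {-fH..fH}"
    by (intro has_integral_of_real has_integral_square_two_band assms)
  have restrict: "(if x \<in> active_band fL fH SL SH N0 lam then fisher_integrand c pp fL fH SL SH N0 lam p i j x else 0)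
      = of_real (k * x^2 * (if \<bar>x\<bar> \<le> fL then wL else wH))" if "x \<in> {-fH..fH}" for x
  proof -
    have "band_w CARD('m) N0 lam (Ss fL fH SL SH x) (Bgain fL fH SL SH N0 lam x)
        = (if \<bar>x\<bar> \<le> fL then wL else wH)"
      using that by (simp add: wL_def wH_def Ss_def Bgain_def abs_le_iff)
    then show ?thesis
      using fisher_integrand_restrict_active_band[OF assms(1-5)] by (simp add: k_def mult_ac)
  qed
  have "((\<lambda>x. if x \<in> active_band fL fH SL SH N0 lam then fisher_integrand c pp fL fH SL SH N0 lam p i j x else 0)
      has_integral of_real (2 * k * (fL^3 * wL + (fH^3 - fL^3) * wH) / 3)) {-fH..fH}"
    by (rule has_integral_eq[OF _ two_band]) (simp add: restrict)
  moreover have "active_band fL fH SL SH N0 lam \<subseteq> {-fH..fH}"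
    by (auto simp: active_band_def abs_le_iff)
  ultimately have "(fisher_integrand c pp fL fH SL SH N0 lam p i j has_integral
      of_real (2 * k * (fL^3 * wL + (fH^3 - fL^3) * wH) / 3)) (active_band fL fH SL SH N0 lam)"
    by simp
  then show ?thesis
    by (simp add: k_def wL_def wH_def J_L_def J_H_def field_simps)
qed

lemma water_level_below_low_band:
  fixes fL fH SL SH N0 lam :: real
  assumes "0 \<le> SH" and "SH \<le> SL" and "0 < N0" and "rate_of_level fL fH SL SH N0 lam > 0"
  shows "lam < SL + N0"
proof (rule ccontr)
  assume "\<not> lam < SL + N0"
  then have "0 < (SL + N0) / lam" and "(SL + N0) / lam \<le> 1"
    and "0 < (SH + N0) / lam" and "(SH + N0) / lam \<le> 1"
    using assms(1-3) by simp_all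
  then have "log 2 ((SL + N0) / lam) \<le> 0" and "log 2 ((SH + N0) / lam) \<le> 0"
    by simp_all
  then have "rate_of_level fL fH SL SH N0 lam = 0"
    unfolding rate_of_level_def by simp
  with assms(4) show False
    by simp
qed

lemma band_w_pos:
  assumes "N0 > 0" and "lam \<ge> 0" and "Sb > 0" and "Bb > 0" and "M > 0"
  shows "band_w M N0 lam Sb Bb > 0"
proof -
  define \<gamma> where "\<gamma> = Sb * Bb^2 / (Bb^2 * N0 + lam * Bb)"
  have "band_w M N0 lam Sb Bb = 2 * real M * \<gamma>^2 / (1 + real M * \<gamma>)"
    using assms(4) unfolding band_w_def Let_def \<gamma>_def by simp
  moreover have "\<gamma> > 0"
    using assms unfolding \<gamma>_def by (simp add: add_pos_nonneg)
  ultimately show ?thesis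
    using assms(5) by (simp add: add_pos_pos)
qed

lemma band_w_nonneg:
  assumes "N0 > 0" and "lam \<ge> 0" and "Sb \<ge> 0"
  shows "band_w M N0 lam Sb Bb \<ge> 0"
proof (cases "Bb > 0")
  case True
  define \<gamma> where "\<gamma> = Sb * Bb^2 / (Bb^2 * N0 + lam * Bb)"
  have "band_w M N0 lam Sb Bb = 2 * real M * \<gamma>^2 / (1 + real M * \<gamma>)"
    using True unfolding band_w_def Let_def \<gamma>_def by simp
  moreover have "\<gamma> \<ge> 0"
    using assms True unfolding \<gamma>_def by simp
  ultimately show ?thesis
    by simp
next
  case False
  then show ?thesis
    unfolding band_w_def by simp
qed

lemma J_L_plus_J_H_pos:
  assumes "0 < fL" and "fL < fH" and "0 < SH" and "SH < SL" and "N0 > 0" and "lam \<ge> 0" and "M > 0"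
    and "rate_of_level fL fH SL SH N0 lam > 0"
  shows "J_L M fL SL N0 lam + J_H M fL fH SH N0 lam > 0"
proof -
  have "lam < SL + N0"
    using assms(3-5,8) by (intro water_level_below_low_band) simp_all
  then have "0 < 1 - lam / (SL + N0)"
    using assms(3-5) by simp
  then have "band_w M N0 lam SL (max 0 (1 - lam / (SL + N0))) > 0"
    using band_w_pos assms(3-7) by simp
  moreover have "band_w M N0 lam SH (max 0 (1 - lam / (SH + N0))) \<ge> 0"
    using band_w_nonneg assms(3,5,6) by simp
  moreover have "fL^3 < fH^3"
    using assms(1,2) by (simp add: power_strict_mono)
  ultimately show ?thesis
    using assms(1) unfolding J_L_def J_H_def by (simp add: add_pos_nonneg)
qed

theorem theorem1:
  fixes pp :: "'m::finite \<Rightarrow> real^'d::finite"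
    and p :: "real^'d"
    and c fL fH SL SH N0 R lam :: real
  assumes M2: "CARD('m) \<ge> 2"
    and c_pos: "c > 0"
    and fL_pos: "0 < fL" and fL_fH: "fL < fH"
    and SH_pos: "0 < SH" and SH_SL: "SH < SL"
    and N0_pos: "N0 > 0"
    and R_pos: "R > 0"
    and lam_nonneg: "lam \<ge> 0"
    and water: "R = rate_of_level fL fH SL SH N0 lam"
    and p_distinct: "\<forall>m. p \<noteq> pp m"
  shows "(\<forall>i j. (fisher_integrand c pp fL fH SL SH N0 lam p i j has_integral
                  complex_of_real (2 * (4 * pi^2 / 3)
                     * (J_L CARD('m) fL SL N0 lam + J_H CARD('m) fL fH SH N0 lam)
                     * Gmat c pp p $ i $ j))
                 (active_band fL fH SL SH N0 lam))
       \<and> J_RD c pp fL fH SL SH N0 lam p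
           = (4 * pi^2 / 3 * (J_L CARD('m) fL SL N0 lam + J_H CARD('m) fL fH SH N0 lam))
               *\<^sub>R Gmat c pp p
       \<and> (invertible (Gmat c pp p) \<longrightarrow>
           matrix_inv (J_RD c pp fL fH SL SH N0 lam p)
             = (3 / (4 * pi^2) * (1 / (J_L CARD('m) fL SL N0 lam + J_H CARD('m) fL fH SH N0 lam)))
                 *\<^sub>R matrix_inv (Gmat c pp p))"
proof -
  define J where "J = J_L CARD('m) fL SL N0 lam + J_H CARD('m) fL fH SH N0 lam"
  have integral: "(fisher_integrand c pp fL fH SL SH N0 lam p i j has_integral
      complex_of_real (2 * (4 * pi^2 / 3) * J * Gmat c pp p $ i $ j)) (active_band fL fH SL SH N0 lam)" for i j
    unfolding J_def using assms by (intro has_integral_fisher_integrand) auto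
  have J_RD: "J_RD c pp fL fH SL SH N0 lam p = (4 * pi^2 / 3 * J) *\<^sub>R Gmat c pp p"
    unfolding J_RD_def by (simp add: vec_eq_iff integral_unique[OF integral])
  have "J > 0"
    unfolding J_def using assms by (intro J_L_plus_J_H_pos) auto
  then have "matrix_inv (J_RD c pp fL fH SL SH N0 lam p) = (3 / (4 * pi^2) * (1 / J)) *\<^sub>R matrix_inv (Gmat c pp p)"
    if "invertible (Gmat c pp p)"
    unfolding J_RD using matrix_inv_scaleR[OF that] by simp
  with integral J_RD show ?thesis
    unfolding J_def by blast
qed

end
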